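(* For all sufficiently large $n\in\mathbb{N}$ there exists a graph $G$ on $n^{3/2}/(10^6\log n)$ vertices such that (i) every vertex of $G$ has degree at most $3n/(2\cdot 10^3)$; (ii) $G$ contains no clique on $10$ vertices; (iii) $G$ has no independent set of size $\sqrt{n}/50$.
   Context: Here $\log$ denotes the natural logarithm, and vertex counts are understood up to rounding to integers. *)

theory Defs
  imports Complex_Main
begin

definition simple_graph :: "'a set \<Rightarrow> ('a \<Rightarrow> 'a \<Rightarrow> bool) \<Rightarrow> bool" where
  "simple_graph V E \<longleftrightarrow> finite V \<and> (\<forall>x y. E x y \<longrightarrow> E y x) \<and> (\<forall>x. \<not> E x x)
     \<and> (\<forall>x y. E x y \<longrightarrow> x \<in> V \<and> y \<in> V)"

definition degree :: "'a set \<Rightarrow> ('a \<Rightarrow> 'a \<Rightarrow> bool) \<Rightarrow> 'a \<Rightarrow> nat" where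
  "degree V E v = card {u \<in> V. E v u}"

definition is_clique :: "'a set \<Rightarrow> ('a \<Rightarrow> 'a \<Rightarrow> bool) \<Rightarrow> 'a set \<Rightarrow> bool" where
  "is_clique V E S \<longleftrightarrow> S \<subseteq> V \<and> (\<forall>x\<in>S. \<forall>y\<in>S. x \<noteq> y \<longrightarrow> E x y)"

definition is_indep_set :: "'a set \<Rightarrow> ('a \<Rightarrow> 'a \<Rightarrow> bool) \<Rightarrow> 'a set \<Rightarrow> bool" where
  "is_indep_set V E S \<longleftrightarrow> S \<subseteq> V \<and> (\<forall>x\<in>S. \<forall>y\<in>S. \<not> E x y)"

end

(*
  Deletion method. In the random graph G(2N, p) with p = D/(8N) the expected number of
  ordered adjacent pairs is at most 4N^2 p = DN/2, while the expected numbers of 10-cliques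
  and of independent k-sets are each below 1/4 for the parameters chosen below. Hence some
  outcome has fewer than DN ordered adjacent pairs, no 10-clique and no independent k-set.
  Fewer than N of its vertices then have degree above D; any N of the remaining vertices
  induce the required graph, as induced subgraphs inherit the absence of cliques and of
  independent sets. For N = round (n^(3/2) / (10^6 log n)), D = 3n/2000 and k = ceil (sqrt n / 50)
  the two expectation bounds hold once n is large.
*)
theory Submission
  imports Defs "HOL-Probability.Product_PMF" "HOL-Real_Asymp.Real_Asymp"
begin

hide_const (open) Polynomial.degree

definition unordered_pairs :: "'a set \<Rightarrow> 'a set set" where
  "unordered_pairs S = {e. e \<subseteq> S \<and> card e = 2}"

lemma card_unordered_pairs: "finite S \<Longrightarrow> card (unordered_pairs S) = card S choose 2"
  unfolding unordered_pairs_def by (simp add: n_subsets)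

lemma mem_unordered_pairs_iff: "e \<in> unordered_pairs S \<longleftrightarrow> (\<exists>x\<in>S. \<exists>y\<in>S. x \<noteq> y \<and> e = {x, y})"
  unfolding unordered_pairs_def by (auto simp: card_2_iff)

lemma ball_unordered_pairs_iff:
  "(\<forall>e\<in>unordered_pairs S. P e) \<longleftrightarrow> (\<forall>x\<in>S. \<forall>y\<in>S. x \<noteq> y \<longrightarrow> P {x, y})"
  unfolding Ball_def mem_unordered_pairs_iff by blast

lemma unordered_pairs_mono: "S \<subseteq> W \<Longrightarrow> unordered_pairs S \<subseteq> unordered_pairs W"
  unfolding unordered_pairs_def by auto

lemma finite_unordered_pairs: "finite W \<Longrightarrow> finite (unordered_pairs W)"
  unfolding unordered_pairs_def by (rule finite_subset[of _ "Pow W"]) auto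

definition graph_of :: "'a set \<Rightarrow> ('a set \<Rightarrow> bool) \<Rightarrow> 'a \<Rightarrow> 'a \<Rightarrow> bool" where
  "graph_of W f u v \<longleftrightarrow> u \<in> W \<and> v \<in> W \<and> u \<noteq> v \<and> f {u, v}"

definition induced :: "('a \<Rightarrow> 'a \<Rightarrow> bool) \<Rightarrow> 'a set \<Rightarrow> 'a \<Rightarrow> 'a \<Rightarrow> bool" where
  "induced E V u v \<longleftrightarrow> u \<in> V \<and> v \<in> V \<and> E u v"

lemma simple_graph_graph_of: "finite W \<Longrightarrow> simple_graph W (graph_of W f)"
  unfolding simple_graph_def graph_of_def by (auto simp: insert_commute)

lemma is_clique_graph_of_iff:
  "is_clique W (graph_of W f) S \<longleftrightarrow> S \<subseteq> W \<and> (\<forall>e\<in>unordered_pairs S. f e)"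
  by (auto simp: is_clique_def graph_of_def ball_unordered_pairs_iff)

lemma is_indep_set_graph_of_iff:
  "is_indep_set W (graph_of W f) S \<longleftrightarrow> S \<subseteq> W \<and> (\<forall>e\<in>unordered_pairs S. \<not> f e)"
  by (auto simp: is_indep_set_def graph_of_def ball_unordered_pairs_iff)

lemma simple_graph_induced: "simple_graph W E \<Longrightarrow> V \<subseteq> W \<Longrightarrow> simple_graph V (induced E V)"
  unfolding simple_graph_def induced_def by (blast intro: finite_subset)

lemma degree_induced_le:
  assumes "simple_graph W E" "V \<subseteq> W"
  shows "degree V (induced E V) v \<le> degree W E v"
proof -
  have "finite W" using assms(1) unfolding simple_graph_def by blast
  then show ?thesis
    unfolding Defs.degree_def induced_def using assms(2) by (intro card_mono) auto
qed

lemma is_clique_induced: "V \<subseteq> W \<Longrightarrow> is_clique V (induced E V) S \<Longrightarrow> is_clique W E S"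
  unfolding is_clique_def induced_def by auto

lemma is_indep_set_induced: "V \<subseteq> W \<Longrightarrow> is_indep_set V (induced E V) S \<Longrightarrow> is_indep_set W E S"
  unfolding is_indep_set_def induced_def by (auto simp: subset_iff)

lemma is_indep_set_subset: "is_indep_set V E S \<Longrightarrow> T \<subseteq> S \<Longrightarrow> is_indep_set V E T"
  unfolding is_indep_set_def by auto

lemma sum_degree_eq_card: "finite V \<Longrightarrow> (\<Sum>v\<in>V. degree V E v) = card {(u, v) \<in> V \<times> V. E u v}"
proof -
  assume "finite V"
  then have "card (Sigma V (\<lambda>u. {v \<in> V. E u v})) = (\<Sum>u\<in>V. card {v \<in> V. E u v})"
    by (intro card_SigmaI) auto
  moreover have "Sigma V (\<lambda>u. {v \<in> V. E u v}) = {(u, v) \<in> V \<times> V. E u v}" by auto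
  ultimately show ?thesis by (simp add: Defs.degree_def)
qed

lemma card_high_degree_less:
  assumes "finite W" and sum: "(\<Sum>v\<in>W. real (degree W E v)) < D * N"
  shows "card {v \<in> W. real (degree W E v) > D} < N"
proof (rule ccontr)
  define H where "H = {v \<in> W. real (degree W E v) > D}"
  assume "\<not> card {v \<in> W. real (degree W E v) > D} < N"
  then have "N \<le> card H" by (simp add: H_def)
  have "0 < D * N" using sum sum_nonneg[of W "\<lambda>v. real (degree W E v)"] by linarith
  then have "D \<ge> 0" by (simp add: zero_less_mult_iff)
  have "D * N \<le> D * card H" using \<open>N \<le> card H\<close> \<open>D \<ge> 0\<close> by (simp add: mult_left_mono)
  also have "\<dots> = (\<Sum>v\<in>H. D)" by simp
  also have "\<dots> \<le> (\<Sum>v\<in>H. real (degree W E v))"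
    by (intro sum_mono) (auto simp: H_def)
  also have "\<dots> \<le> (\<Sum>v\<in>W. real (degree W E v))"
    using assms(1) by (intro sum_mono2) (auto simp: H_def)
  finally show False using sum by simp
qed

lemma exists_induced_subgraph_degree_le:
  fixes D :: real
  assumes "simple_graph W E" "2 * N \<le> card W" "(\<Sum>v\<in>W. real (degree W E v)) < D * N"
  shows "\<exists>V \<subseteq> W. card V = N \<and> (\<forall>v\<in>V. real (degree V (induced E V) v) \<le> D)"
proof -
  have "finite W" using assms(1) unfolding simple_graph_def by blast
  define H where "H = {v \<in> W. real (degree W E v) > D}"
  have "card H < N" using card_high_degree_less[OF \<open>finite W\<close> assms(3)] by (simp add: H_def)
  moreover have "card (W - H) = card W - card H"
    using \<open>finite W\<close> by (intro card_Diff_subset) (auto simp: H_def)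
  ultimately have "N \<le> card (W - H)" using assms(2) by linarith
  then obtain V where V: "V \<subseteq> W - H" "card V = N" by (rule obtain_subset_with_card_n)
  have "real (degree V (induced E V) v) \<le> D" if "v \<in> V" for v
  proof -
    have "degree V (induced E V) v \<le> degree W E v"
      using V(1) by (intro degree_induced_le assms(1)) blast
    moreover have "real (degree W E v) \<le> D" using that V(1) by (auto simp: H_def)
    ultimately show ?thesis by linarith
  qed
  then show ?thesis using V by blast
qed

subsection \<open>Random graphs\<close>

lemma expectation_card_filter:
  assumes "finite T"
  shows "measure_pmf.expectation Q (\<lambda>\<omega>. real (card {t \<in> T. P \<omega> t})) = (\<Sum>t\<in>T. measure_pmf.prob Q {\<omega>. P \<omega> t})"
proof -
  have "real (card {t \<in> T. P \<omega> t}) = (\<Sum>t\<in>T. indicator {\<omega>. P \<omega> t} \<omega>)" for \<omega>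
    using assms by (simp add: indicator_def sum.inter_filter[symmetric] Int_def)
  moreover have "integrable (measure_pmf Q) (indicator A :: _ \<Rightarrow> real)" for A
    by (rule integrable_real_indicator) (simp_all add: less_top[symmetric])
  ultimately show ?thesis
    by (simp add: Bochner_Integration.integral_sum)
qed

lemma exists_less_of_expectation_less:
  fixes X :: "'a \<Rightarrow> real"
  assumes "integrable (measure_pmf Q) X" "measure_pmf.expectation Q X < c"
  shows "\<exists>\<omega>. X \<omega> < c"
proof (rule ccontr)
  assume below: "\<nexists>\<omega>. X \<omega> < c"
  have "measure_pmf.expectation Q (\<lambda>_. c) \<le> measure_pmf.expectation Q X"
    by (rule integral_mono) (use below assms(1) in \<open>auto simp: not_less\<close>)
  with assms(2) show False by simp
qed

definition random_graph :: "'a set \<Rightarrow> real \<Rightarrow> ('a set \<Rightarrow> bool) pmf" where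
  "random_graph W p = Pi_pmf (unordered_pairs W) False (\<lambda>_. bernoulli_pmf p)"

lemma finite_set_pmf_random_graph: "finite W \<Longrightarrow> finite (set_pmf (random_graph W p))"
  unfolding random_graph_def by (auto simp: set_Pi_pmf finite_unordered_pairs intro!: finite_PiE_dflt)

lemma integrable_random_graph:
  fixes X :: "('a set \<Rightarrow> bool) \<Rightarrow> real"
  shows "finite W \<Longrightarrow> integrable (measure_pmf (random_graph W p)) X"
  by (intro integrable_measure_pmf_finite finite_set_pmf_random_graph)

lemma prob_random_graph_const_on:
  assumes "finite W" "A \<subseteq> unordered_pairs W" "0 \<le> p" "p \<le> 1"
  shows "measure_pmf.prob (random_graph W p) {f. \<forall>e\<in>A. f e = b} = (if b then p else 1 - p) ^ card A"
proof -
  have fin: "finite (unordered_pairs W)" using assms(1) by (rule finite_unordered_pairs)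
  have "{f. \<forall>e\<in>A. f e = b} = Pi (unordered_pairs W) (\<lambda>e. if e \<in> A then {b} else UNIV)"
    using assms(2) by (auto simp: Pi_def)
  then have "measure_pmf.prob (random_graph W p) {f. \<forall>e\<in>A. f e = b}
      = (\<Prod>e\<in>unordered_pairs W. measure_pmf.prob (bernoulli_pmf p) (if e \<in> A then {b} else UNIV))"
    by (simp add: random_graph_def measure_Pi_pmf_Pi fin)
  also have "\<dots> = (\<Prod>e\<in>unordered_pairs W. if e \<in> A then (if b then p else 1 - p) else 1)"
    by (intro prod.cong refl) (auto simp: measure_pmf_single assms)
  also have "\<dots> = (if b then p else 1 - p) ^ card A"
    using assms(2) fin by (simp add: prod.If_cases Int_absorb1)
  finally show ?thesis .
qed

lemma expectation_edge_count_le: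
  assumes "finite W" "0 \<le> p" "p \<le> 1"
  shows "measure_pmf.expectation (random_graph W p) (\<lambda>f. real (card {(u, v) \<in> W \<times> W. graph_of W f u v}))
    \<le> real (card W) ^ 2 * p"
proof -
  have "{(u, v) \<in> W \<times> W. graph_of W f u v} = {t \<in> W \<times> W. graph_of W f (fst t) (snd t)}" for f
    by auto
  then have "measure_pmf.expectation (random_graph W p) (\<lambda>f. real (card {(u, v) \<in> W \<times> W. graph_of W f u v}))
      = (\<Sum>t\<in>W \<times> W. measure_pmf.prob (random_graph W p) {f. graph_of W f (fst t) (snd t)})"
    using expectation_card_filter[OF finite_cartesian_product[OF assms(1) assms(1)]] by simp
  also have "\<dots> \<le> (\<Sum>t\<in>W \<times> W. p)"
  proof (intro sum_mono)
    fix t assume "t \<in> W \<times> W"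
    then obtain u v where t: "t = (u, v)" and uv: "u \<in> W" "v \<in> W" by blast
    show "measure_pmf.prob (random_graph W p) {f. graph_of W f (fst t) (snd t)} \<le> p"
    proof (cases "u = v")
      case False
      have "{f. graph_of W f u v} = {f. \<forall>e\<in>{{u, v}}. f e = True}"
        using uv False by (auto simp: graph_of_def)
      moreover have "{{u, v}} \<subseteq> unordered_pairs W"
        using uv False by (auto simp: mem_unordered_pairs_iff)
      ultimately show ?thesis
        using prob_random_graph_const_on[OF assms(1) _ assms(2,3), of "{{u, v}}" True] t by simp
    qed (simp add: graph_of_def t assms(2))
  qed
  also have "\<dots> = real (card W) ^ 2 * p" by (simp add: card_cartesian_product power2_eq_square)
  finally show ?thesis .
qed

lemma expectation_card_homogeneous_sets:
  assumes "finite W" "0 \<le> p" "p \<le> 1"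
  shows "measure_pmf.expectation (random_graph W p)
      (\<lambda>f. real (card {S. S \<subseteq> W \<and> card S = r \<and> (\<forall>e\<in>unordered_pairs S. f e = b)}))
    = real (card W choose r) * (if b then p else 1 - p) ^ (r choose 2)"
proof -
  define T where "T = {S. S \<subseteq> W \<and> card S = r}"
  have "finite T" by (rule finite_subset[OF _ finite_Collect_subsets[OF assms(1)]]) (auto simp: T_def)
  have "{S. S \<subseteq> W \<and> card S = r \<and> (\<forall>e\<in>unordered_pairs S. f e = b)} = {S \<in> T. \<forall>e\<in>unordered_pairs S. f e = b}" for f
    by (auto simp: T_def)
  then have "measure_pmf.expectation (random_graph W p)
      (\<lambda>f. real (card {S. S \<subseteq> W \<and> card S = r \<and> (\<forall>e\<in>unordered_pairs S. f e = b)}))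
    = (\<Sum>S\<in>T. measure_pmf.prob (random_graph W p) {f. \<forall>e\<in>unordered_pairs S. f e = b})"
    using expectation_card_filter[OF \<open>finite T\<close>] by simp
  also have "\<dots> = (\<Sum>S\<in>T. (if b then p else 1 - p) ^ (r choose 2))"
  proof (intro sum.cong refl)
    fix S assume "S \<in> T"
    then have "S \<subseteq> W" "card S = r" "finite S" using assms(1) finite_subset by (auto simp: T_def)
    then have "card (unordered_pairs S) = r choose 2" by (simp add: card_unordered_pairs)
    then show "measure_pmf.prob (random_graph W p) {f. \<forall>e\<in>unordered_pairs S. f e = b} = (if b then p else 1 - p) ^ (r choose 2)"
      using prob_random_graph_const_on[OF assms(1) unordered_pairs_mono[OF \<open>S \<subseteq> W\<close>] assms(2,3)] by simp
  qed
  also have "\<dots> = real (card W choose r) * (if b then p else 1 - p) ^ (r choose 2)"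
    by (simp add: T_def n_subsets assms(1))
  finally show ?thesis .
qed

lemma exists_sparse_outcome_without_homogeneous_sets:
  assumes "finite W" "0 \<le> p" "p \<le> 1" "c > 0"
    and bound: "real (card W) ^ 2 * p / c + real (card W choose r) * p ^ (r choose 2)
      + real (card W choose k) * (1 - p) ^ (k choose 2) < 1"
  shows "\<exists>f. real (card {(u, v) \<in> W \<times> W. graph_of W f u v}) < c
    \<and> \<not> (\<exists>S. S \<subseteq> W \<and> card S = r \<and> (\<forall>e\<in>unordered_pairs S. f e))
    \<and> \<not> (\<exists>S. S \<subseteq> W \<and> card S = k \<and> (\<forall>e\<in>unordered_pairs S. \<not> f e))"
proof -
  define edges where "edges f = real (card {(u, v) \<in> W \<times> W. graph_of W f u v})" for f
  define homogeneous where
    "homogeneous b s f = {S. S \<subseteq> W \<and> card S = s \<and> (\<forall>e\<in>unordered_pairs S. f e = b)}"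
    for b :: bool and s :: nat and f :: "'a set \<Rightarrow> bool"
  define X where "X f = edges f / c + real (card (homogeneous True r f)) + real (card (homogeneous False k f))" for f
  have hom: "measure_pmf.expectation (random_graph W p) (\<lambda>f. real (card (homogeneous b s f)))
      = real (card W choose s) * (if b then p else 1 - p) ^ (s choose 2)" for b s
    unfolding homogeneous_def by (rule expectation_card_homogeneous_sets[OF assms(1-3)])
  have "measure_pmf.expectation (random_graph W p) X
      = measure_pmf.expectation (random_graph W p) edges / c
        + real (card W choose r) * p ^ (r choose 2) + real (card W choose k) * (1 - p) ^ (k choose 2)"
    unfolding X_def using hom[of True r] hom[of False k]
    by (simp add: integrable_random_graph[OF assms(1)])
  also have "\<dots> < 1"
  proof -
    have "measure_pmf.expectation (random_graph W p) edges / c \<le> real (card W) ^ 2 * p / c"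
      unfolding edges_def using expectation_edge_count_le[OF assms(1-3)] assms(4)
      by (intro divide_right_mono) auto
    then show ?thesis using bound by linarith
  qed
  finally obtain f where "X f < 1"
    using exists_less_of_expectation_less integrable_random_graph[OF assms(1)] by blast
  moreover have "0 \<le> edges f / c" using assms(4) by (simp add: edges_def)
  ultimately have "edges f / c < 1" "card (homogeneous True r f) = 0" "card (homogeneous False k f) = 0"
    unfolding X_def by linarith+
  moreover have "finite (homogeneous b s f)" for b s
    unfolding homogeneous_def by (rule finite_subset[OF _ finite_Collect_subsets[OF assms(1)]]) auto
  ultimately have "edges f < c" "homogeneous True r f = {}" "homogeneous False k f = {}"
    using assms(4) by auto
  then show ?thesis unfolding edges_def homogeneous_def by auto
qed

lemma exists_graph_sparse_no_clique_no_indep_set: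
  assumes "finite W" "0 \<le> p" "p \<le> 1" "c > 0"
    and "real (card W) ^ 2 * p / c + real (card W choose r) * p ^ (r choose 2)
      + real (card W choose k) * (1 - p) ^ (k choose 2) < 1"
  shows "\<exists>E. simple_graph W E \<and> (\<Sum>v\<in>W. real (degree W E v)) < c
    \<and> \<not> (\<exists>S. is_clique W E S \<and> card S = r) \<and> \<not> (\<exists>S. is_indep_set W E S \<and> card S = k)"
proof -
  obtain f where f: "real (card {(u, v) \<in> W \<times> W. graph_of W f u v}) < c"
    "\<not> (\<exists>S. S \<subseteq> W \<and> card S = r \<and> (\<forall>e\<in>unordered_pairs S. f e))"
    "\<not> (\<exists>S. S \<subseteq> W \<and> card S = k \<and> (\<forall>e\<in>unordered_pairs S. \<not> f e))"
    using exists_sparse_outcome_without_homogeneous_sets[OF assms] by blast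
  have "(\<Sum>v\<in>W. real (degree W (graph_of W f) v)) = real (card {(u, v) \<in> W \<times> W. graph_of W f u v})"
    using sum_degree_eq_card[OF assms(1)] by (metis of_nat_sum)
  then show ?thesis
    using f simple_graph_graph_of[OF assms(1)]
    by (intro exI[of _ "graph_of W f"]) (auto simp: is_clique_graph_of_iff is_indep_set_graph_of_iff)
qed

lemma exists_graph_degree_le_no_clique_no_indep_set:
  fixes N r k :: nat and D p :: real
  assumes "N \<ge> 1" "D > 0" and p: "p = D / (8 * N)" "p \<le> 1"
    and clique: "real (2 * N choose r) * p ^ (r choose 2) < 1/4"
    and indep: "real (2 * N choose k) * (1 - p) ^ (k choose 2) < 1/4"
  shows "\<exists>(V::nat set) E. simple_graph V E \<and> card V = N \<and> (\<forall>v\<in>V. real (degree V E v) \<le> D)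
    \<and> \<not> (\<exists>S. is_clique V E S \<and> card S = r) \<and> \<not> (\<exists>S. is_indep_set V E S \<and> card S = k)"
proof -
  define W :: "nat set" where "W = {0..<2 * N}"
  have "finite W" "card W = 2 * N" by (simp_all add: W_def)
  have "0 \<le> p" "D * N > 0" using assms(1,2) p(1) by simp_all
  have "real (card W) ^ 2 * p / (D * N) = 1/2"
    using assms(1,2) \<open>card W = 2 * N\<close> by (simp add: p(1) field_simps power2_eq_square)
  then have "real (card W) ^ 2 * p / (D * N) + real (card W choose r) * p ^ (r choose 2)
      + real (card W choose k) * (1 - p) ^ (k choose 2) < 1"
    using clique indep unfolding \<open>card W = 2 * N\<close> by linarith
  then obtain E where E: "simple_graph W E" "(\<Sum>v\<in>W. real (degree W E v)) < D * N"
      "\<not> (\<exists>S. is_clique W E S \<and> card S = r)" "\<not> (\<exists>S. is_indep_set W E S \<and> card S = k)"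
    using exists_graph_sparse_no_clique_no_indep_set[OF \<open>finite W\<close> \<open>0 \<le> p\<close> p(2) \<open>D * N > 0\<close>]
    by blast
  obtain V where V: "V \<subseteq> W" "card V = N" "\<forall>v\<in>V. real (degree V (induced E V) v) \<le> D"
    using exists_induced_subgraph_degree_le[OF E(1) _ E(2)] \<open>card W = 2 * N\<close> by auto
  show ?thesis
    using simple_graph_induced[OF E(1) V(1)] V E(3,4) is_clique_induced[OF V(1)] is_indep_set_induced[OF V(1)]
    by blast
qed

subsection \<open>Choice of parameters\<close>

lemma of_nat_choose_two: "real (k choose 2) = real k * (real k - 1) / 2"
proof (induction k)
  case (Suc k)
  have "Suc k choose 2 = k + (k choose 2)" by (simp add: numeral_2_eq_2)
  then show ?case using Suc by (simp add: field_simps)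
qed simp

lemma binomial_le_power_real: "real (n choose k) \<le> real n ^ k"
proof (cases "k \<le> n")
  case True
  then show ?thesis by (metis binomial_le_pow of_nat_le_iff of_nat_power)
qed (simp add: binomial_eq_0)

lemma binomial_mult_power_less_quarter:
  fixes M k :: nat and p :: real
  assumes "M > 0" "0 \<le> p" "p \<le> 1" "k \<ge> 1" and exponent: "ln M + 4 \<le> p * (real k - 1) / 2"
  shows "real (M choose k) * (1 - p) ^ (k choose 2) < 1/4"
proof -
  have "real (M choose k) * (1 - p) ^ (k choose 2) \<le> real M ^ k * exp (- p) ^ (k choose 2)"
    using exp_ge_add_one_self[of "- p"] assms(3)
    by (intro mult_mono binomial_le_power_real power_mono) auto
  also have "\<dots> = exp (real k * ln M) * exp (- p * real (k choose 2))"
    using assms(1) exp_of_nat_mult[of "k choose 2" "- p"] by (simp add: exp_of_nat_mult mult.commute)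
  also have "\<dots> = exp (real k * (ln M - p * (real k - 1) / 2))"
    by (simp add: of_nat_choose_two exp_add[symmetric] field_simps)
  also have "\<dots> \<le> exp (real k * (- 4))"
  proof -
    have "real k * (ln M - p * (real k - 1) / 2) \<le> real k * (- 4)"
      using exponent by (intro mult_left_mono) auto
    then show ?thesis by simp
  qed
  also have "\<dots> \<le> exp (- 4)"
    using assms(4) by simp
  also have "\<dots> < 1/4"
    using exp_ge_add_one_self[of 4] by (simp add: exp_minus field_simps)
  finally show ?thesis .
qed

lemma binomial_ten_mult_power_le:
  fixes N :: nat and D b :: real
  assumes "N \<ge> 1" "0 \<le> D" "0 < b" "b \<le> real N"
  shows "real (2 * N choose 10) * (D / (8 * N)) ^ (10 choose 2) \<le> 2^10 * D^45 / (8^45 * b^35)"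
proof -
  have "real (2 * N choose 10) * (D / (8 * N)) ^ 45 \<le> real (2 * N) ^ 10 * (D / (8 * N)) ^ 45"
    using assms(2) by (intro mult_right_mono binomial_le_power_real) simp
  also have "\<dots> = 2^10 * D^45 / (8^45 * real N^35)"
    using assms(1) by (simp add: power_divide power_mult_distrib field_simps)
  also have "\<dots> \<le> 2^10 * D^45 / (8^45 * b^35)"
    using assms(2-4) by (intro divide_left_mono mult_left_mono power_mono mult_pos_pos zero_less_power) auto
  finally show ?thesis by (simp add: choose_two)
qed

definition feasible_parameters :: "real \<Rightarrow> real \<Rightarrow> real \<Rightarrow> bool" where
  "feasible_parameters a D s \<longleftrightarrow> a \<ge> 3/2 \<and> 0 < D \<and> D \<le> 8 * (a - 1/2)
    \<and> 2^10 * D^45 / (8^45 * (a - 1/2)^35) < 1/4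
    \<and> ln (2 * a + 1) + 4 \<le> D / (8 * (a + 1/2)) * (s - 1) / 2 \<and> s \<ge> 1"

lemma exists_graph_for_parameters:
  assumes "feasible_parameters a D s"
  shows "\<exists>(V::nat set) E. simple_graph V E \<and> card V = nat (round a) \<and> (\<forall>v\<in>V. real (degree V E v) \<le> D)
    \<and> \<not> (\<exists>S. is_clique V E S \<and> card S = 10) \<and> \<not> (\<exists>S. is_indep_set V E S \<and> real (card S) \<ge> s)"
proof -
  from assms have a: "a \<ge> 3/2" and D: "0 < D" "D \<le> 8 * (a - 1/2)"
    and clique: "2^10 * D^45 / (8^45 * (a - 1/2)^35) < 1/4"
    and indep: "ln (2 * a + 1) + 4 \<le> D / (8 * (a + 1/2)) * (s - 1) / 2" and s: "s \<ge> 1"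
    unfolding feasible_parameters_def by auto
  define N where "N = nat (round a)"
  define p where "p = D / (8 * N)"
  define k where "k = nat \<lceil>s\<rceil>"
  have "round a \<ge> 1" using of_int_round_ge[of a] a by linarith
  then have N: "a - 1/2 \<le> real N" "real N \<le> a + 1/2"
    using of_int_round_ge[of a] of_int_round_le[of a] by (simp_all add: N_def)
  then have "N \<ge> 1" using a by linarith
  have "0 < p" "p \<le> 1" using D N \<open>N \<ge> 1\<close> by (auto simp: p_def field_simps)
  have "real k \<ge> s" unfolding k_def by (rule real_nat_ceiling_ge)
  then have "k \<ge> 1" using s by linarith
  have "real (2 * N choose 10) * p ^ (10 choose 2) \<le> 2^10 * D^45 / (8^45 * (a - 1/2)^35)"
    unfolding p_def using N(1) a D(1) by (intro binomial_ten_mult_power_le \<open>N \<ge> 1\<close>) auto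
  then have "real (2 * N choose 10) * p ^ (10 choose 2) < 1/4" using clique by linarith
  moreover have "real (2 * N choose k) * (1 - p) ^ (k choose 2) < 1/4"
  proof (rule binomial_mult_power_less_quarter)
    have "D / (8 * (a + 1/2)) * (s - 1) \<le> p * (real k - 1)"
    proof (rule mult_mono)
      show "D / (8 * (a + 1/2)) \<le> p"
        unfolding p_def using N D(1) \<open>N \<ge> 1\<close> by (intro divide_left_mono) auto
    qed (use s \<open>real k \<ge> s\<close> \<open>0 < p\<close> in auto)
    have "ln (real (2 * N)) + 4 \<le> ln (2 * a + 1) + 4" using N \<open>N \<ge> 1\<close> by simp
    also have "\<dots> \<le> D / (8 * (a + 1/2)) * (s - 1) / 2" by (rule indep)
    also have "\<dots> \<le> p * (real k - 1) / 2"
      using \<open>D / (8 * (a + 1/2)) * (s - 1) \<le> p * (real k - 1)\<close> by (rule divide_right_mono) simp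
    finally show "ln (real (2 * N)) + 4 \<le> p * (real k - 1) / 2" .
  qed (use \<open>N \<ge> 1\<close> \<open>0 < p\<close> \<open>p \<le> 1\<close> \<open>k \<ge> 1\<close> in auto)
  ultimately have "\<exists>(V::nat set) E. simple_graph V E \<and> card V = N \<and> (\<forall>v\<in>V. real (degree V E v) \<le> D)
    \<and> \<not> (\<exists>S. is_clique V E S \<and> card S = 10) \<and> \<not> (\<exists>S. is_indep_set V E S \<and> card S = k)"
    by (rule exists_graph_degree_le_no_clique_no_indep_set[OF \<open>N \<ge> 1\<close> D(1) p_def \<open>p \<le> 1\<close>])
  then obtain V :: "nat set" and E where G: "simple_graph V E" "card V = N" "\<forall>v\<in>V. real (degree V E v) \<le> D"
    "\<not> (\<exists>S. is_clique V E S \<and> card S = 10)" "\<not> (\<exists>S. is_indep_set V E S \<and> card S = k)"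
    by blast
  have "\<not> (\<exists>S. is_indep_set V E S \<and> real (card S) \<ge> s)"
  proof
    assume "\<exists>S. is_indep_set V E S \<and> real (card S) \<ge> s"
    then obtain S where S: "is_indep_set V E S" "k \<le> card S" by (auto simp: k_def nat_ceiling_le_eq)
    obtain T where "T \<subseteq> S" "card T = k" using S(2) by (rule obtain_subset_with_card_n)
    then show False using G(5) is_indep_set_subset[OF S(1)] by blast
  qed
  then show ?thesis using G unfolding N_def by blast
qed

theorem lemma2p1:
  shows "\<exists>n0::nat. \<forall>n\<ge>n0. \<exists>(V::nat set) E.
     simple_graph V E
     \<and> card V = nat (round (real n powr (3/2) / (10^6 * ln (real n))))
     \<and> (\<forall>v\<in>V. real (degree V E v) \<le> 3 * real n / (2 * 10^3))
     \<and> \<not> (\<exists>S. is_clique V E S \<and> card S = 10)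
     \<and> \<not> (\<exists>S. is_indep_set V E S \<and> real (card S) \<ge> sqrt (real n) / 50)"
proof -
  have "\<forall>\<^sub>F x in at_top. feasible_parameters (x powr (3/2) / (10^6 * ln x)) (3 * x / (2 * 10^3)) (sqrt x / 50)"
    unfolding feasible_parameters_def by (intro eventually_conj; real_asymp)
  then have "\<forall>\<^sub>F n in sequentially. feasible_parameters
      (real n powr (3/2) / (10^6 * ln (real n))) (3 * real n / (2 * 10^3)) (sqrt (real n) / 50)"
    by (rule eventually_compose_filterlim[OF _ filterlim_real_sequentially])
  then obtain n0 where "\<forall>n\<ge>n0. feasible_parameters
      (real n powr (3/2) / (10^6 * ln (real n))) (3 * real n / (2 * 10^3)) (sqrt (real n) / 50)"
    unfolding eventually_sequentially by blast
  then show ?thesis using exists_graph_for_parameters by blast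
qed

end
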